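(* Let $H$ be a Hilbert space, $A,B$ strictly positive bounded operators on $H$, $\lambda>0$, $\mu\in\mathbb{R}$ and $k\in\{0,1,2,\dots\}$. Then, in the operator order, (1) $S_{\mu-(k+1)\lambda}(A|B)\le \tilde T_{\mu,k+1,-\lambda}(A|B)\le S_{\mu-k\lambda}(A|B)$; (2) $S_{\mu+k\lambda}(A|B)\le \tilde T_{\mu,k+1,\lambda}(A|B)\le S_{\mu+(k+1)\lambda}(A|B)$.
   Context: A bounded operator $T$ on $H$ is strictly positive ($T>0$) if $(Tx,x)\ge0$ for all $x$ and $T$ is invertible; $X\le Y$ means $((Y-X)x,x)\ge 0$ for all $x$. Powers and $\log$ of strictly positive operators are defined by functional calculus. For $A>0$, $B>0$ and $\nu\in\mathbb{R}$: $A\natural_\nu B=A^{1/2}(A^{-1/2}BA^{-1/2})^{\nu}A^{1/2}$, and the generalized relative operator entropy is $S_\nu(A|B)=A^{1/2}(A^{-1/2}BA^{-1/2})^{\nu}(\log A^{-1/2}BA^{-1/2})A^{1/2}$. For $\lambda,\mu\in\mathbb{R}$, $\lambda\ne 0$, $k\in\mathbb{Z}$, the generalized Tsallis relative operator entropy is $\tilde T_{\mu,k,\lambda}(A|B)=\dfrac{A\natural_{\mu+k\lambda}B-A\natural_{\mu+(k-1)\lambda}B}{\lambda}$. *)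

theory Defs
  imports "HOL-Analysis.Analysis" "HOL-Computational_Algebra.Polynomial"
begin

(* Bounded operators on a real Hilbert space 'a (class real_inner + complete_space)
  are represented by the library type  'a \<Rightarrow>\<^sub>L 'a  (bounded linear functions). *)

definition op_invertible :: "('a::real_normed_vector \<Rightarrow>\<^sub>L 'a) \<Rightarrow> bool" where
  "op_invertible T \<longleftrightarrow> (\<exists>S. S o\<^sub>L T = id_blinfun \<and> T o\<^sub>L S = id_blinfun)"

definition self_adjoint :: "('a::real_inner \<Rightarrow>\<^sub>L 'a) \<Rightarrow> bool" where
  "self_adjoint T \<longleftrightarrow> (\<forall>x y. inner (T x) y = inner x (T y))"

definition op_le :: "('a::real_inner \<Rightarrow>\<^sub>L 'a) \<Rightarrow> ('a \<Rightarrow>\<^sub>L 'a) \<Rightarrow> bool" where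
  "op_le X Y \<longleftrightarrow> (\<forall>x. inner ((Y - X) x) x \<ge> 0)"

(* Strictly positive: positive, (self-adjoint, automatic over complex scalars) and invertible. *)
definition strictly_positive :: "('a::real_inner \<Rightarrow>\<^sub>L 'a) \<Rightarrow> bool" where
  "strictly_positive T \<longleftrightarrow> self_adjoint T \<and> (\<forall>x. inner (T x) x \<ge> 0) \<and> op_invertible T"

fun op_pow :: "('a::real_normed_vector \<Rightarrow>\<^sub>L 'a) \<Rightarrow> nat \<Rightarrow> ('a \<Rightarrow>\<^sub>L 'a)" where
  "op_pow T 0 = id_blinfun"
| "op_pow T (Suc n) = T o\<^sub>L op_pow T n"

definition poly_op :: "real poly \<Rightarrow> ('a::real_normed_vector \<Rightarrow>\<^sub>L 'a) \<Rightarrow> ('a \<Rightarrow>\<^sub>L 'a)" where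
  "poly_op p T = (\<Sum>i\<le>degree p. coeff p i *\<^sub>R op_pow T i)"

definition op_spectrum :: "('a::real_normed_vector \<Rightarrow>\<^sub>L 'a) \<Rightarrow> real set" where
  "op_spectrum T = {z. \<not> op_invertible (T - z *\<^sub>R id_blinfun)}"

(* Continuous functional calculus: f(T) is the norm limit of p(T) for polynomials p
  converging uniformly to f on the spectrum of T (Weierstrass construction). *)
definition cfc :: "(real \<Rightarrow> real) \<Rightarrow> ('a::real_normed_vector \<Rightarrow>\<^sub>L 'a) \<Rightarrow> ('a \<Rightarrow>\<^sub>L 'a)" where
  "cfc f T = (THE L. \<forall>\<epsilon>>0. \<exists>\<delta>>0. \<forall>p.
      (\<forall>t\<in>op_spectrum T. \<bar>f t - poly p t\<bar> < \<delta>) \<longrightarrow> norm (L - poly_op p T) < \<epsilon>)"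

definition op_powr :: "('a::real_normed_vector \<Rightarrow>\<^sub>L 'a) \<Rightarrow> real \<Rightarrow> ('a \<Rightarrow>\<^sub>L 'a)" where
  "op_powr T \<nu> = cfc (\<lambda>t. t powr \<nu>) T"

definition op_log :: "('a::real_normed_vector \<Rightarrow>\<^sub>L 'a) \<Rightarrow> ('a \<Rightarrow>\<^sub>L 'a)" where
  "op_log T = cfc ln T"

definition wmean :: "real \<Rightarrow> ('a::real_normed_vector \<Rightarrow>\<^sub>L 'a) \<Rightarrow> ('a \<Rightarrow>\<^sub>L 'a) \<Rightarrow> ('a \<Rightarrow>\<^sub>L 'a)" where
  "wmean \<nu> A B = (let C = op_powr A (-1/2) o\<^sub>L B o\<^sub>L op_powr A (-1/2)
                  in op_powr A (1/2) o\<^sub>L op_powr C \<nu> o\<^sub>L op_powr A (1/2))"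

definition rel_entropy :: "real \<Rightarrow> ('a::real_normed_vector \<Rightarrow>\<^sub>L 'a) \<Rightarrow> ('a \<Rightarrow>\<^sub>L 'a) \<Rightarrow> ('a \<Rightarrow>\<^sub>L 'a)" where
  "rel_entropy \<nu> A B = (let C = op_powr A (-1/2) o\<^sub>L B o\<^sub>L op_powr A (-1/2)
                  in op_powr A (1/2) o\<^sub>L op_powr C \<nu> o\<^sub>L op_log C o\<^sub>L op_powr A (1/2))"

definition tsallis :: "real \<Rightarrow> int \<Rightarrow> real \<Rightarrow> ('a::real_normed_vector \<Rightarrow>\<^sub>L 'a) \<Rightarrow> ('a \<Rightarrow>\<^sub>L 'a) \<Rightarrow> ('a \<Rightarrow>\<^sub>L 'a)" where
  "tsallis \<mu> k l A B = (1 / l) *\<^sub>R (wmean (\<mu> + of_int k * l) A B - wmean (\<mu> + of_int (k - 1) * l) A B)"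

end

theory Submission
  imports Defs "HOL-Computational_Algebra.Fundamental_Theorem_Algebra"
begin

(* With C = A^(-1/2) B A^(-1/2), every operator in the statement has the form A^(1/2) f(C) A^(1/2)
  for a function f continuous on the spectrum of C, which lies in (0, oo): f(t) = t^b ln t for the
  relative entropies and f(t) = (t^(b+l) - t^b) / l for the Tsallis entropies. The scalar
  inequalities t^b ln t <= (t^(b+l) - t^b) / l <= t^(b+l) ln t (ln s <= s - 1 at s = t^l and
  s = t^(-l)) therefore transfer, because the continuous functional calculus is linear,
  multiplicative and monotone, and congruence by A^(1/2) preserves the operator order.
  That f(T) exists for self-adjoint T rests on norm p(T) <= max |p| over the spectrum of T for
  real polynomials p (spectral mapping via the linear and irreducible quadratic factors of p,
  together with the fact that norm S or -norm S lies in the spectrum of a self-adjoint S), so the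
  Weierstrass approximations p_n of f give a Cauchy sequence p_n(T), whose limit is f(T). *)

section \<open>Composition, invertibility and self-adjointness\<close>

interpretation blinfun_compose: bounded_bilinear blinfun_compose
  by (rule bounded_bilinear_blinfun_compose)

lemma blinfun_compose_assoc: "(X o\<^sub>L Y) o\<^sub>L Z = X o\<^sub>L (Y o\<^sub>L Z)"
  by (rule blinfun_eqI) simp

lemma blinfun_compose_id [simp]:
  "id_blinfun o\<^sub>L X = X"
  "X o\<^sub>L id_blinfun = X"
  by (auto intro: blinfun_eqI)

lemma inner_apply_le_norm:
  fixes S :: "'a::real_inner \<Rightarrow>\<^sub>L 'a"
  shows "inner (S x) x \<le> norm S * (norm x)\<^sup>2"
proof -
  have "inner (S x) x \<le> norm (S x) * norm x" by (rule norm_cauchy_schwarz)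
  also have "\<dots> \<le> norm S * norm x * norm x" by (simp add: mult_right_mono norm_blinfun)
  finally show ?thesis by (simp add: power2_eq_square mult.assoc)
qed

lemma op_invertible_id: "op_invertible id_blinfun"
  unfolding op_invertible_def by auto

lemma op_invertible_compose:
  assumes "op_invertible S" and "op_invertible T"
  shows "op_invertible (S o\<^sub>L T)"
proof -
  obtain S' where S': "S' o\<^sub>L S = id_blinfun" "S o\<^sub>L S' = id_blinfun"
    using assms(1) unfolding op_invertible_def by blast
  obtain T' where T': "T' o\<^sub>L T = id_blinfun" "T o\<^sub>L T' = id_blinfun"
    using assms(2) unfolding op_invertible_def by blast
  have "(T' o\<^sub>L S') o\<^sub>L (S o\<^sub>L T) = id_blinfun" "(S o\<^sub>L T) o\<^sub>L (T' o\<^sub>L S') = id_blinfun"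
    using S' T' by (metis blinfun_compose_assoc blinfun_compose_id(1))+
  then show ?thesis unfolding op_invertible_def by blast
qed

lemma op_invertible_scaleR_iff:
  assumes "c \<noteq> 0"
  shows "op_invertible (c *\<^sub>R S) \<longleftrightarrow> op_invertible S"
proof -
  have scaled: "op_invertible (c *\<^sub>R S)" if S: "op_invertible S" and c: "c \<noteq> 0"
    for c and S :: "'a \<Rightarrow>\<^sub>L 'a"
  proof -
    obtain S' where "S' o\<^sub>L S = id_blinfun" "S o\<^sub>L S' = id_blinfun"
      using S unfolding op_invertible_def by blast
    then show ?thesis unfolding op_invertible_def
      using c by (intro exI[of _ "inverse c *\<^sub>R S'"])
        (simp add: blinfun_compose.scaleR_left blinfun_compose.scaleR_right)
  qed
  show ?thesis
    using scaled[of S c] scaled[of "c *\<^sub>R S" "inverse c"] assms by auto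
qed

lemma op_invertible_uminus: "op_invertible (- S) \<longleftrightarrow> op_invertible S"
  using op_invertible_scaleR_iff[of "-1" S] by simp

lemma op_invertible_bounded_below:
  assumes "op_invertible S"
  obtains K where "K > 0" and "\<And>x. norm x \<le> K * norm (S x)"
proof -
  obtain R where R: "R o\<^sub>L S = id_blinfun"
    using assms unfolding op_invertible_def by blast
  have "norm x \<le> (norm R + 1) * norm (S x)" for x
  proof -
    have "norm x = norm (R (S x))"
      using R by (metis blinfun_apply_blinfun_compose blinfun_apply_id_blinfun)
    also have "\<dots> \<le> norm R * norm (S x)" by (rule norm_blinfun)
    also have "\<dots> \<le> (norm R + 1) * norm (S x)" by (simp add: mult_right_mono)
    finally show ?thesis .
  qed
  then show ?thesis using that[of "norm R + 1"] by (simp add: add_nonneg_pos)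
qed

lemma op_spectrum_uminus: "t \<in> op_spectrum (- S) \<longleftrightarrow> - t \<in> op_spectrum S"
proof -
  have "- S - t *\<^sub>R id_blinfun = - (S - (- t) *\<^sub>R id_blinfun)" by simp
  then show ?thesis by (simp only: op_spectrum_def mem_Collect_eq op_invertible_uminus)
qed

lemma self_adjoint_apply: "self_adjoint S \<Longrightarrow> inner (S x) y = inner x (S y)"
  by (simp add: self_adjoint_def)

lemma self_adjoint_id: "self_adjoint id_blinfun"
  by (simp add: self_adjoint_def)

lemma self_adjoint_add: "self_adjoint S \<Longrightarrow> self_adjoint T \<Longrightarrow> self_adjoint (S + T)"
  by (simp add: self_adjoint_def blinfun.add_left inner_add_left inner_add_right)

lemma self_adjoint_scaleR: "self_adjoint S \<Longrightarrow> self_adjoint (c *\<^sub>R S)"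
  by (simp add: self_adjoint_def blinfun.scaleR_left)

lemma self_adjoint_uminus: "self_adjoint S \<Longrightarrow> self_adjoint (- S)"
  by (simp add: self_adjoint_def blinfun.minus_left)

lemma self_adjoint_diff: "self_adjoint S \<Longrightarrow> self_adjoint T \<Longrightarrow> self_adjoint (S - T)"
  by (simp add: self_adjoint_def blinfun.diff_left inner_diff_left inner_diff_right)

lemma self_adjoint_compose_commuting:
  assumes "self_adjoint S" and "self_adjoint R" and "S o\<^sub>L R = R o\<^sub>L S"
  shows "self_adjoint (S o\<^sub>L R)"
  unfolding self_adjoint_def
proof (intro allI)
  fix x y
  have "inner (S (R x)) y = inner x (R (S y))"
    using assms(1,2) by (simp add: self_adjoint_def)
  also have "R (S y) = S (R y)"
    using assms(3) by (metis blinfun_apply_blinfun_compose)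
  finally show "inner ((S o\<^sub>L R) x) y = inner x ((S o\<^sub>L R) y)" by simp
qed

lemma self_adjoint_sandwich:
  assumes "self_adjoint P" and "self_adjoint S"
  shows "self_adjoint (P o\<^sub>L S o\<^sub>L P)"
  using assms by (simp add: self_adjoint_def)

lemma inner_self_adjoint_square:
  assumes "self_adjoint S"
  shows "inner (S (S x)) x = (norm (S x))\<^sup>2"
  using self_adjoint_apply[OF assms, of "S x" x] by (simp add: power2_norm_eq_inner)

lemmas self_adjoint_intros =
  self_adjoint_id self_adjoint_add self_adjoint_scaleR self_adjoint_uminus self_adjoint_diff

lemma op_le_sandwich:
  assumes "self_adjoint P" and "op_le X Y"
  shows "op_le (P o\<^sub>L X o\<^sub>L P) (P o\<^sub>L Y o\<^sub>L P)"
  unfolding op_le_def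
proof
  fix x
  have "inner (((P o\<^sub>L Y o\<^sub>L P) - (P o\<^sub>L X o\<^sub>L P)) x) x = inner (P ((Y - X) (P x))) x"
    by (simp only: blinfun.diff_left blinfun.diff_right blinfun_apply_blinfun_compose)
  also have "\<dots> = inner ((Y - X) (P x)) (P x)"
    by (rule self_adjoint_apply[OF assms(1)])
  finally have eq: "inner (((P o\<^sub>L Y o\<^sub>L P) - (P o\<^sub>L X o\<^sub>L P)) x) x = inner ((Y - X) (P x)) (P x)" .
  have "inner ((Y - X) (P x)) (P x) \<ge> 0"
    using assms(2) unfolding op_le_def by blast
  then show "inner (((P o\<^sub>L Y o\<^sub>L P) - (P o\<^sub>L X o\<^sub>L P)) x) x \<ge> 0"
    unfolding eq .
qed

section \<open>Completeness and the Neumann series\<close>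

text \<open>The library instance \<open>blinfun :: (real_normed_vector, banach) banach\<close> does not apply
  to a type variable of sort \<open>{real_normed_vector, complete_space}\<close>, so completeness is shown
  directly.\<close>

lemma Cauchy_blinfun_pointwise_limit_uniform:
  fixes X :: "nat \<Rightarrow> 'a::real_normed_vector \<Rightarrow>\<^sub>L 'b::real_normed_vector"
  assumes X: "Cauchy X" and v: "\<And>x. (\<lambda>n. X n x) \<longlonglongrightarrow> v x" and "e > 0"
  obtains N where "\<And>n x. n \<ge> N \<Longrightarrow> norm (X n x - v x) \<le> e * norm x"
proof -
  obtain N where N: "\<And>m n. m \<ge> N \<Longrightarrow> n \<ge> N \<Longrightarrow> norm (X m - X n) < e"
    using CauchyD[OF X \<open>e > 0\<close>] by blast
  have "norm (X n x - v x) \<le> e * norm x" if "n \<ge> N" for n x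
  proof (rule Lim_bounded)
    show "(\<lambda>m. norm (X n x - X m x)) \<longlonglongrightarrow> norm (X n x - v x)"
      by (intro tendsto_intros v)
    show "\<forall>m\<ge>N. norm (X n x - X m x) \<le> e * norm x"
    proof (intro allI impI)
      fix m assume "m \<ge> N"
      have "norm (X n x - X m x) \<le> norm (X n - X m) * norm x"
        by (metis blinfun.diff_left norm_blinfun)
      also have "\<dots> \<le> e * norm x"
        using N[OF \<open>n \<ge> N\<close> \<open>m \<ge> N\<close>] by (simp add: mult_right_mono)
      finally show "norm (X n x - X m x) \<le> e * norm x" .
    qed
  qed
  then show ?thesis by (rule that)
qed

lemma bounded_linear_pointwise_limit:
  fixes X :: "nat \<Rightarrow> 'a::real_normed_vector \<Rightarrow>\<^sub>L 'b::real_normed_vector"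
  assumes v: "\<And>x. (\<lambda>n. X n x) \<longlonglongrightarrow> v x"
    and close: "\<And>x. norm (X N x - v x) \<le> C * norm x"
  shows "bounded_linear v"
proof
  show "v (x + y) = v x + v y" for x y
  proof -
    have "(\<lambda>n. X n (x + y)) \<longlonglongrightarrow> v x + v y"
      using tendsto_add[OF v[of x] v[of y]] by (simp add: blinfun.add_right)
    then show ?thesis by (rule LIMSEQ_unique[OF v[of "x + y"]])
  qed
  show "v (r *\<^sub>R x) = r *\<^sub>R v x" for r x
  proof -
    have "(\<lambda>n. X n (r *\<^sub>R x)) \<longlonglongrightarrow> r *\<^sub>R v x"
      using tendsto_scaleR[OF tendsto_const[of r] v[of x]] by (simp add: blinfun.scaleR_right)
    then show ?thesis by (rule LIMSEQ_unique[OF v[of "r *\<^sub>R x"]])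
  qed
  have "norm (v x) \<le> norm x * (norm (X N) + C)" for x
  proof -
    have "norm (v x) \<le> norm (X N x) + norm (X N x - v x)"
      using norm_triangle_sub[of "v x" "X N x"] by (simp add: norm_minus_commute)
    also have "\<dots> \<le> norm (X N) * norm x + C * norm x"
      by (intro add_mono norm_blinfun close)
    finally show ?thesis by (simp add: algebra_simps)
  qed
  then show "\<exists>K. \<forall>x. norm (v x) \<le> norm x * K" by blast
qed

lemma Cauchy_blinfun_convergent:
  fixes X :: "nat \<Rightarrow> 'a::real_normed_vector \<Rightarrow>\<^sub>L 'b::{real_normed_vector, complete_space}"
  assumes X: "Cauchy X"
  shows "convergent X"
proof -
  have "Cauchy (\<lambda>n. X n x)" for x
    using blinfun.bounded_linear_left X by (rule bounded_linear.Cauchy)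
  then obtain v where v: "\<And>x. (\<lambda>n. X n x) \<longlonglongrightarrow> v x"
    unfolding Cauchy_convergent_iff convergent_def by metis
  obtain N1 where N1: "\<And>n x. n \<ge> N1 \<Longrightarrow> norm (X n x - v x) \<le> 1 * norm x"
    using Cauchy_blinfun_pointwise_limit_uniform[OF X v zero_less_one] by blast
  have v_linear: "bounded_linear v"
    by (rule bounded_linear_pointwise_limit[OF v N1[OF order_refl]])
  have "X \<longlonglongrightarrow> Blinfun v"
  proof (rule LIMSEQ_I)
    fix r :: real assume "r > 0"
    then have "r / 2 > 0" by simp
    then obtain N where N: "\<And>n x. n \<ge> N \<Longrightarrow> norm (X n x - v x) \<le> r / 2 * norm x"
      using Cauchy_blinfun_pointwise_limit_uniform[OF X v] by blast
    have "norm (X n - Blinfun v) \<le> r / 2" if "n \<ge> N" for n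
      using N[OF that] \<open>r > 0\<close>
      by (intro norm_blinfun_bound)
        (simp_all add: blinfun.diff_left bounded_linear_Blinfun_apply[OF v_linear])
    then have "norm (X n - Blinfun v) < r" if "n \<ge> N" for n
      using that \<open>r > 0\<close> by fastforce
    then show "\<exists>N. \<forall>n\<ge>N. norm (X n - Blinfun v) < r" by blast
  qed
  then show ?thesis by (rule convergentI)
qed

lemma Cauchy_partial_sums_of_summable_bound:
  fixes f :: "nat \<Rightarrow> 'a::real_normed_vector"
  assumes g: "summable g" and f: "\<And>n. norm (f n) \<le> g n"
  shows "Cauchy (\<lambda>n. \<Sum>i<n. f i)"
proof (rule CauchyI')
  fix e :: real assume "e > 0"
  then obtain N where N: "\<And>m n. m \<ge> N \<Longrightarrow> norm (sum g {m..<n}) < e"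
    using g unfolding summable_Cauchy by blast
  have "dist (\<Sum>i<m. f i) (\<Sum>i<n. f i) < e" if "m \<ge> N" "n > m" for m n
  proof -
    have "(\<Sum>i<n. f i) - (\<Sum>i<m. f i) = sum f {m..<n}"
      using sum_diff_nat_ivl[of 0 m n f] that by (simp add: lessThan_atLeast0)
    then have "dist (\<Sum>i<m. f i) (\<Sum>i<n. f i) = norm (sum f {m..<n})"
      by (simp add: dist_norm norm_minus_commute[of "\<Sum>i<m. f i"])
    also have "\<dots> \<le> sum g {m..<n}" by (rule sum_norm_le) (rule f)
    also have "\<dots> < e" using N[OF \<open>m \<ge> N\<close>, of n] by simp
    finally show ?thesis .
  qed
  then show "\<exists>M. \<forall>m\<ge>M. \<forall>n>m. dist (\<Sum>i<m. f i) (\<Sum>i<n. f i) < e" by blast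
qed

lemma norm_op_pow_le: "norm (op_pow X n) \<le> norm X ^ n"
proof (induction n)
  case 0 then show ?case by (simp add: norm_blinfun_id_le)
next
  case (Suc n)
  have "norm (op_pow X (Suc n)) \<le> norm X * norm (op_pow X n)"
    by (simp add: norm_blinfun_compose)
  also have "\<dots> \<le> norm X * norm X ^ n"
    by (rule mult_left_mono[OF Suc.IH]) simp
  finally show ?case by simp
qed

lemma op_pow_Suc_right: "op_pow X (Suc n) = op_pow X n o\<^sub>L X"
proof (induction n)
  case 0
  then show ?case by simp
next
  case (Suc n)
  then show ?case by (metis op_pow.simps(2) blinfun_compose_assoc)
qed

lemma op_invertible_id_minus:
  fixes X :: "'a::{real_normed_vector, complete_space} \<Rightarrow>\<^sub>L 'a"
  assumes "norm X < 1"
  shows "op_invertible (id_blinfun - X)"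
proof -
  define S where "S n = (\<Sum>i<n. op_pow X i)" for n
  have "Cauchy S"
    unfolding S_def using assms
    by (intro Cauchy_partial_sums_of_summable_bound[OF summable_geometric norm_op_pow_le]) simp
  then obtain R where R: "S \<longlonglongrightarrow> R"
    using Cauchy_blinfun_convergent convergent_def by blast
  have "(\<lambda>n. op_pow X n) \<longlonglongrightarrow> 0"
    using assms by (intro Lim_null_comparison[OF _ LIMSEQ_power_zero[of "norm X"]])
      (simp_all add: norm_op_pow_le)
  then have id_minus_pow: "(\<lambda>n. id_blinfun - op_pow X n) \<longlonglongrightarrow> id_blinfun"
    using tendsto_diff[OF tendsto_const] by fastforce
  have "(id_blinfun - X) o\<^sub>L S n = (\<Sum>i<n. op_pow X i - op_pow X (Suc i))" for n
    by (simp add: S_def blinfun_compose.sum_right blinfun_compose.diff_left)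
  then have left: "(id_blinfun - X) o\<^sub>L S n = id_blinfun - op_pow X n" for n
    by (simp only: sum_lessThan_telescope' op_pow.simps(1))
  have "S n o\<^sub>L (id_blinfun - X) = (\<Sum>i<n. op_pow X i - op_pow X (Suc i))" for n
    by (simp add: S_def blinfun_compose.sum_left blinfun_compose.diff_right op_pow_Suc_right
        sum_subtractf del: op_pow.simps(2))
  then have right: "S n o\<^sub>L (id_blinfun - X) = id_blinfun - op_pow X n" for n
    by (simp only: sum_lessThan_telescope' op_pow.simps(1))
  have "(\<lambda>n. (id_blinfun - X) o\<^sub>L S n) \<longlonglongrightarrow> ((id_blinfun - X) o\<^sub>L R)"
    by (intro blinfun_compose.tendsto tendsto_const R)
  then have right_inverse: "(id_blinfun - X) o\<^sub>L R = id_blinfun"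
    using id_minus_pow unfolding left by (rule LIMSEQ_unique)
  have "(\<lambda>n. S n o\<^sub>L (id_blinfun - X)) \<longlonglongrightarrow> (R o\<^sub>L (id_blinfun - X))"
    by (intro blinfun_compose.tendsto tendsto_const R)
  then have left_inverse: "R o\<^sub>L (id_blinfun - X) = id_blinfun"
    using id_minus_pow unfolding right by (rule LIMSEQ_unique)
  show ?thesis
    unfolding op_invertible_def using left_inverse right_inverse by blast
qed

section \<open>Self-adjoint operators and their spectrum\<close>

lemma self_adjoint_norm_le:
  fixes X :: "'a::real_inner \<Rightarrow>\<^sub>L 'a"
  assumes X: "self_adjoint X" and c: "c \<ge> 0"
    and bound: "\<And>x. \<bar>inner (X x) x\<bar> \<le> c * (norm x)\<^sup>2"
  shows "norm X \<le> c"
proof (rule norm_blinfun_bound[OF c])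
  fix x
  show "norm (X x) \<le> c * norm x"
  proof (cases "X x = 0")
    case True
    then show ?thesis using c by simp
  next
    case False
    then have Xx: "norm (X x) > 0" and "x \<noteq> 0" by auto
    \<comment> \<open>polarization with \<open>y\<close> the multiple of \<open>X x\<close> of the same length as \<open>x\<close>\<close>
    define y where "y = (norm x / norm (X x)) *\<^sub>R X x"
    have "norm y = norm x" using Xx by (simp add: y_def)
    have "inner (X x) y = norm x * norm (X x)"
      using Xx by (simp add: y_def power2_norm_eq_inner[symmetric] power2_eq_square)
    moreover have "inner (X (x + y)) (x + y) - inner (X (x - y)) (x - y) = 4 * inner (X x) y"
      using self_adjoint_apply[OF X, of y x]
      by (simp add: blinfun.bilinear_simps inner_add_left inner_add_right inner_diff_left
          inner_diff_right inner_commute)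
    moreover have "(norm (x + y))\<^sup>2 + (norm (x - y))\<^sup>2 = 2 * (norm x)\<^sup>2 + 2 * (norm y)\<^sup>2"
      by (simp add: power2_norm_eq_inner inner_add_left inner_add_right inner_diff_left
          inner_diff_right inner_commute)
    ultimately have "4 * (norm x * norm (X x)) \<le> c * (2 * (norm x)\<^sup>2 + 2 * (norm y)\<^sup>2)"
      using bound[of "x + y"] bound[of "x - y"] by (smt (verit) distrib_left abs_le_D1 abs_le_D2)
    then have "norm x * norm (X x) \<le> norm x * (c * norm x)"
      using \<open>norm y = norm x\<close> by (simp add: power2_eq_square algebra_simps)
    then show ?thesis using \<open>x \<noteq> 0\<close> by simp
  qed
qed

lemma self_adjoint_bounded_below_invertible:
  fixes S :: "'a::{real_inner, complete_space} \<Rightarrow>\<^sub>L 'a"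
  assumes S: "self_adjoint S" and "m > 0"
    and lower: "\<And>x. m * (norm x)\<^sup>2 \<le> inner (S x) x"
  shows "op_invertible S"
proof -
  \<comment> \<open>\<open>S / M\<close> is a perturbation of the identity of norm at most \<open>1 - m / M\<close>\<close>
  define M where "M = norm S + m"
  have "M > 0" "m \<le> M" using \<open>m > 0\<close> by (simp_all add: M_def add_nonneg_pos)
  define X where "X = id_blinfun - (1 / M) *\<^sub>R S"
  have "\<bar>inner (X x) x\<bar> \<le> (1 - m / M) * (norm x)\<^sup>2" for x
  proof -
    have "inner (X x) x = (norm x)\<^sup>2 - inner (S x) x / M"
      by (simp add: X_def blinfun.bilinear_simps inner_diff_left power2_norm_eq_inner)
    moreover have "inner (S x) x / M \<le> (norm x)\<^sup>2"
    proof -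
      have "0 \<le> m * (norm x)\<^sup>2" using \<open>m > 0\<close> by simp
      then have "inner (S x) x \<le> M * (norm x)\<^sup>2"
        using inner_apply_le_norm[of S x] by (simp add: M_def distrib_right)
      then show ?thesis using \<open>M > 0\<close> by (simp add: divide_le_eq mult.commute)
    qed
    moreover have "m / M * (norm x)\<^sup>2 \<le> inner (S x) x / M"
      using lower[of x] \<open>M > 0\<close> by (simp add: divide_right_mono)
    ultimately show ?thesis by (simp add: algebra_simps)
  qed
  then have "norm X \<le> 1 - m / M"
    using \<open>m \<le> M\<close> \<open>M > 0\<close>
    by (intro self_adjoint_norm_le) (simp_all add: X_def self_adjoint_intros S)
  also have "\<dots> < 1" using \<open>m > 0\<close> \<open>M > 0\<close> by simp
  finally have "op_invertible ((1 / M) *\<^sub>R S)"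
    using op_invertible_id_minus[of X] by (simp add: X_def)
  then show ?thesis using \<open>M > 0\<close> by (simp add: op_invertible_scaleR_iff)
qed

lemma self_adjoint_spectrum_lower_bound:
  fixes S :: "'a::{real_inner, complete_space} \<Rightarrow>\<^sub>L 'a"
  assumes S: "self_adjoint S" and lower: "\<And>x. a * (norm x)\<^sup>2 \<le> inner (S x) x"
    and t: "t \<in> op_spectrum S"
  shows "a \<le> t"
proof (rule ccontr)
  assume "\<not> a \<le> t"
  have "(a - t) * (norm x)\<^sup>2 \<le> inner ((S - t *\<^sub>R id_blinfun) x) x" for x
    using lower[of x]
    by (simp add: blinfun.diff_left blinfun.scaleR_left inner_diff_left power2_norm_eq_inner
        algebra_simps)
  then have "op_invertible (S - t *\<^sub>R id_blinfun)"
    using \<open>\<not> a \<le> t\<close>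
    by (intro self_adjoint_bounded_below_invertible[of _ "a - t"] self_adjoint_intros S) auto
  with t show False by (simp add: op_spectrum_def)
qed

lemma self_adjoint_spectrum_subset:
  fixes S :: "'a::{real_inner, complete_space} \<Rightarrow>\<^sub>L 'a"
  assumes S: "self_adjoint S"
    and lower: "\<And>x. a * (norm x)\<^sup>2 \<le> inner (S x) x"
    and upper: "\<And>x. inner (S x) x \<le> b * (norm x)\<^sup>2"
  shows "op_spectrum S \<subseteq> {a..b}"
proof
  fix t assume t: "t \<in> op_spectrum S"
  have "a \<le> t" by (rule self_adjoint_spectrum_lower_bound[OF S lower t])
  moreover have "- b \<le> - t"
  proof (rule self_adjoint_spectrum_lower_bound)
    show "self_adjoint (- S)" by (rule self_adjoint_uminus[OF S])
    show "- b * (norm x)\<^sup>2 \<le> inner ((- S) x) x" for x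
      using upper[of x] by (simp add: blinfun.minus_left)
    show "- t \<in> op_spectrum (- S)" using t by (simp add: op_spectrum_uminus)
  qed
  ultimately show "t \<in> {a..b}" by simp
qed

lemma norm_blinfun_approx:
  fixes S :: "'a::real_normed_vector \<Rightarrow>\<^sub>L 'b::real_normed_vector"
  assumes nontrivial: "\<exists>x::'a. x \<noteq> 0" and "e > 0"
  obtains x where "norm x = 1" and "(norm S)\<^sup>2 - e < (norm (S x))\<^sup>2"
proof (cases "(norm S)\<^sup>2 < e")
  case True
  obtain x0 :: 'a where "x0 \<noteq> 0" using nontrivial by blast
  show ?thesis
  proof (rule that)
    show "norm (x0 /\<^sub>R norm x0) = 1" using \<open>x0 \<noteq> 0\<close> by simp
    show "(norm S)\<^sup>2 - e < (norm (S (x0 /\<^sub>R norm x0)))\<^sup>2"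
      using True by (smt (verit) zero_le_power2)
  qed
next
  case False
  define r where "r = sqrt ((norm S)\<^sup>2 - e)"
  have "r \<ge> 0" using False by (simp add: r_def)
  have "r < norm S"
    using real_sqrt_less_mono[of "(norm S)\<^sup>2 - e" "(norm S)\<^sup>2"] \<open>e > 0\<close> by (simp add: r_def)
  then obtain x where x: "norm (S x) > r * norm x"
    using norm_blinfun_bound[OF \<open>r \<ge> 0\<close>, of S] by (meson not_le)
  then have "x \<noteq> 0" by auto
  have "norm (S (x /\<^sub>R norm x)) > r"
    using x \<open>x \<noteq> 0\<close> by (simp add: blinfun.scaleR_right field_simps)
  then have "(norm (S (x /\<^sub>R norm x)))\<^sup>2 > r\<^sup>2"
    using \<open>r \<ge> 0\<close> by (simp add: power_strict_mono)
  then show ?thesis using False \<open>x \<noteq> 0\<close> by (intro that[of "x /\<^sub>R norm x"]) (simp_all add: r_def)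
qed

lemma norm_self_adjoint_square_shift_le:
  fixes S :: "'a::real_inner \<Rightarrow>\<^sub>L 'a"
  assumes S: "self_adjoint S"
  shows "(norm (S (S x) - (norm S)\<^sup>2 *\<^sub>R x))\<^sup>2
    \<le> (norm S)\<^sup>2 * ((norm S)\<^sup>2 * (norm x)\<^sup>2 - (norm (S x))\<^sup>2)"
proof -
  let ?M = "norm S"
  have "norm (S (S x)) \<le> ?M * norm (S x)" by (rule norm_blinfun)
  then have SS: "(norm (S (S x)))\<^sup>2 \<le> ?M\<^sup>2 * (norm (S x))\<^sup>2"
    by (metis norm_ge_zero power_mono power_mult_distrib)
  have "(norm (S (S x) - ?M\<^sup>2 *\<^sub>R x))\<^sup>2
      = (norm (S (S x)))\<^sup>2 - 2 * ?M\<^sup>2 * inner (S (S x)) x + ?M\<^sup>2 * ?M\<^sup>2 * (norm x)\<^sup>2"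
    by (simp add: power2_norm_eq_inner inner_diff_left inner_diff_right inner_commute algebra_simps)
  also have "\<dots> \<le> ?M\<^sup>2 * (?M\<^sup>2 * (norm x)\<^sup>2 - (norm (S x))\<^sup>2)"
    using SS inner_self_adjoint_square[OF S, of x] by (simp add: algebra_simps)
  finally show ?thesis .
qed

lemma self_adjoint_norm_in_spectrum:
  fixes S :: "'a::{real_inner, complete_space} \<Rightarrow>\<^sub>L 'a"
  assumes S: "self_adjoint S" and nontrivial: "\<exists>x::'a. x \<noteq> 0"
  shows "norm S \<in> op_spectrum S \<or> - norm S \<in> op_spectrum S"
proof (rule ccontr)
  let ?M = "norm S"
  assume "\<not> ?thesis"
  then have "op_invertible ((S - ?M *\<^sub>R id_blinfun) o\<^sub>L (S - (- ?M) *\<^sub>R id_blinfun))"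
    by (intro op_invertible_compose) (auto simp: op_spectrum_def)
  moreover have "(S - ?M *\<^sub>R id_blinfun) o\<^sub>L (S - (- ?M) *\<^sub>R id_blinfun)
      = (S o\<^sub>L S) - ?M\<^sup>2 *\<^sub>R id_blinfun"
    by (rule blinfun_eqI) (simp add: blinfun.bilinear_simps algebra_simps power2_eq_square)
  ultimately obtain K
    where "K > 0" and K: "\<And>x. norm x \<le> K * norm (((S o\<^sub>L S) - ?M\<^sup>2 *\<^sub>R id_blinfun) x)"
    by (auto elim: op_invertible_bounded_below)
  \<comment> \<open>an approximate maximizer of \<open>norm (S x)\<close> is an approximate eigenvector of \<open>S o S\<close>\<close>
  obtain x where "norm x = 1" and x: "?M\<^sup>2 - 1 / (K\<^sup>2 * ?M\<^sup>2 + 1) < (norm (S x))\<^sup>2"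
    using norm_blinfun_approx[OF nontrivial, of "1 / (K\<^sup>2 * ?M\<^sup>2 + 1)"]
    by (metis add_nonneg_pos mult_nonneg_nonneg zero_le_power2 zero_less_divide_1_iff zero_less_one)
  have "1 \<le> K * norm (S (S x) - ?M\<^sup>2 *\<^sub>R x)"
    using K[of x] \<open>norm x = 1\<close> by (simp add: blinfun.diff_left blinfun.scaleR_left)
  then have "1 \<le> K\<^sup>2 * (norm (S (S x) - ?M\<^sup>2 *\<^sub>R x))\<^sup>2"
    using one_le_power[of _ 2] by (fastforce simp: power_mult_distrib)
  also have "\<dots> \<le> K\<^sup>2 * (?M\<^sup>2 * (?M\<^sup>2 - (norm (S x))\<^sup>2))"
    using norm_self_adjoint_square_shift_le[OF S, of x] \<open>norm x = 1\<close> by (simp add: mult_left_mono)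
  also have "\<dots> \<le> K\<^sup>2 * ?M\<^sup>2 * (1 / (K\<^sup>2 * ?M\<^sup>2 + 1))"
  proof -
    have "?M\<^sup>2 * (?M\<^sup>2 - (norm (S x))\<^sup>2) \<le> ?M\<^sup>2 * (1 / (K\<^sup>2 * ?M\<^sup>2 + 1))"
      using x by (intro mult_left_mono) simp_all
    then show ?thesis by (metis mult.assoc mult_left_mono zero_le_power2)
  qed
  also have "\<dots> < 1" by (simp add: add_nonneg_pos)
  finally show False by simp
qed

section \<open>Polynomials in an operator\<close>

lemma poly_op_eq_sum:
  assumes "degree p \<le> n"
  shows "poly_op p T = (\<Sum>i\<le>n. coeff p i *\<^sub>R op_pow T i)"
  unfolding poly_op_def
  by (rule sum.mono_neutral_left) (use assms in \<open>auto simp: coeff_eq_0\<close>)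

lemma poly_op_0 [simp]: "poly_op 0 T = 0"
  by (simp add: poly_op_def)

lemma poly_op_const [simp]: "poly_op [:c:] T = c *\<^sub>R id_blinfun"
  by (simp add: poly_op_def)

lemma poly_op_add: "poly_op (p + q) T = poly_op p T + poly_op q T"
proof -
  let ?n = "max (degree p) (degree q)"
  have "poly_op (p + q) T = (\<Sum>i\<le>?n. coeff (p + q) i *\<^sub>R op_pow T i)"
    by (rule poly_op_eq_sum) (simp add: degree_add_le)
  also have "\<dots> = poly_op p T + poly_op q T"
    by (simp add: poly_op_eq_sum[of p ?n] poly_op_eq_sum[of q ?n] scaleR_add_left sum.distrib)
  finally show ?thesis .
qed

lemma poly_op_smult: "poly_op (smult c p) T = c *\<^sub>R poly_op p T"
proof -
  have "poly_op (smult c p) T = (\<Sum>i\<le>degree p. coeff (smult c p) i *\<^sub>R op_pow T i)"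
    by (rule poly_op_eq_sum) (simp add: degree_smult_le)
  then show ?thesis by (simp add: poly_op_def scaleR_sum_right)
qed

lemma poly_op_diff: "poly_op (p - q) T = poly_op p T - poly_op q T"
  using poly_op_add[of p "- q" T] poly_op_smult[of "-1" q T] by simp

lemma poly_op_pCons: "poly_op (pCons a p) T = a *\<^sub>R id_blinfun + (T o\<^sub>L poly_op p T)"
proof -
  have "poly_op (pCons 0 p) T = (\<Sum>i\<le>Suc (degree p). coeff (pCons 0 p) i *\<^sub>R op_pow T i)"
    by (rule poly_op_eq_sum) (simp add: degree_pCons_le)
  also have "\<dots> = (\<Sum>i\<le>degree p. coeff p i *\<^sub>R op_pow T (Suc i))"
    by (subst sum.atMost_Suc_shift) simp
  also have "\<dots> = T o\<^sub>L poly_op p T"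
    by (simp add: poly_op_def blinfun_compose.sum_right blinfun_compose.scaleR_right)
  finally have "poly_op (pCons 0 p) T = T o\<^sub>L poly_op p T" .
  moreover have "pCons a p = [:a:] + pCons 0 p" by simp
  ultimately show ?thesis by (metis poly_op_add poly_op_const)
qed

lemma poly_op_mult: "poly_op (p * q) T = poly_op p T o\<^sub>L poly_op q T"
proof (induction p rule: pCons_induct)
  case 0
  then show ?case by simp
next
  case (pCons a p)
  then show ?case
    by (simp add: poly_op_add poly_op_smult poly_op_pCons blinfun_compose.bilinear_simps
        blinfun_compose_assoc)
qed

lemma poly_op_commute: "T o\<^sub>L poly_op p T = poly_op p T o\<^sub>L T"
  using poly_op_mult[of "[:0, 1:]" p T] poly_op_mult[of p "[:0, 1:]" T]
  by (simp add: poly_op_pCons mult.commute)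

lemma self_adjoint_poly_op:
  assumes T: "self_adjoint T"
  shows "self_adjoint (poly_op p T)"
proof (induction p rule: pCons_induct)
  case 0
  then show ?case by (simp add: self_adjoint_def)
next
  case (pCons a p)
  then show ?case
    unfolding poly_op_pCons
    by (intro self_adjoint_intros self_adjoint_compose_commuting T poly_op_commute)
qed

lemma map_poly_of_real_add:
  "map_poly complex_of_real (p + q) = map_poly of_real p + map_poly of_real q"
  by (rule poly_eqI) (simp add: coeff_map_poly)

lemma map_poly_of_real_mult:
  "map_poly complex_of_real (p * q) = map_poly of_real p * map_poly of_real q"
  by (rule poly_eqI) (simp add: coeff_map_poly coeff_mult)

lemma poly_map_poly_of_real: "poly (map_poly complex_of_real p) (of_real x) = of_real (poly p x)"
  by (induction p) (simp_all add: map_poly_pCons)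

lemma real_poly_linear_eq_0_if_nonreal_root:
  fixes r :: "real poly"
  assumes "degree r < 2" and "poly (map_poly complex_of_real r) z = 0" and "Im z \<noteq> 0"
  shows "r = 0"
proof -
  have r: "r = [:coeff r 0, coeff r 1:]"
    using assms(1) by (auto intro!: poly_eqI simp: coeff_pCons coeff_eq_0 split: nat.split)
  have "poly (map_poly complex_of_real [:coeff r 0, coeff r 1:]) z = 0"
    using assms(2) by (simp only: r[symmetric])
  then have "of_real (coeff r 0) + of_real (coeff r 1) * z = 0"
    by (simp add: map_poly_pCons mult.commute)
  then have "coeff r 1 = 0" "coeff r 0 = 0"
    using assms(3) by (auto simp: complex_eq_iff)
  then show ?thesis by (subst r) simp
qed

lemma real_poly_linear_or_quadratic_factor:
  fixes q :: "real poly"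
  assumes "degree q > 0"
  obtains (linear) r where "[:-r, 1:] dvd q"
    | (quadratic) a b where "b \<noteq> 0" and "[:-a, 1:]\<^sup>2 + [:b\<^sup>2:] dvd q"
proof -
  let ?C = "map_poly complex_of_real"
  have "degree (?C q) = degree q" by (rule degree_map_poly) simp
  then have "\<not> (\<exists>a l. a \<noteq> 0 \<and> l = 0 \<and> ?C q = pCons a l)"
    using assms by auto
  then obtain z where z: "poly (?C q) z = 0"
    using fundamental_theorem_of_algebra_alt by blast
  show ?thesis
  proof (cases "Im z = 0")
    case True
    then have "z = of_real (Re z)" by (simp add: complex_eq_iff)
    then have "poly q (Re z) = 0" using z by (metis poly_map_poly_of_real of_real_eq_0_iff)
    then show ?thesis by (intro linear) (simp add: poly_eq_0_iff_dvd)
  next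
    case False
    \<comment> \<open>\<open>d\<close> is the real polynomial with roots \<open>z\<close> and \<open>cnj z\<close>\<close>
    define d where "d = [:-Re z, 1:]\<^sup>2 + [:(Im z)\<^sup>2:]"
    have "degree ([:-Re z, 1:]\<^sup>2) = 2" by (simp add: degree_power_eq)
    then have "degree d = 2" by (simp add: d_def degree_add_eq_left)
    then have "d \<noteq> 0" by auto
    have "poly (?C d) z = 0"
      by (simp add: d_def map_poly_of_real_add map_poly_of_real_mult power2_eq_square
          map_poly_pCons complex_eq_iff algebra_simps)
    moreover have "?C q = ?C d * ?C (q div d) + ?C (q mod d)"
      by (simp flip: map_poly_of_real_add map_poly_of_real_mult)
    ultimately have "poly (?C (q mod d)) z = 0"
      using z by simp
    moreover have "degree (q mod d) < 2"
      using degree_mod_less[OF \<open>d \<noteq> 0\<close>, of q] \<open>degree d = 2\<close> by fastforce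
    ultimately have "q mod d = 0"
      using False by (intro real_poly_linear_eq_0_if_nonreal_root)
    then show ?thesis
      using False by (intro quadratic[of "Im z" "Re z"]) (simp_all add: d_def mod_eq_0_iff_dvd)
  qed
qed

lemma poly_op_quadratic_invertible:
  fixes T :: "'a::{real_inner, complete_space} \<Rightarrow>\<^sub>L 'a"
  assumes T: "self_adjoint T" and "b \<noteq> 0"
  shows "op_invertible (poly_op ([:-a, 1:]\<^sup>2 + [:b\<^sup>2:]) T)"
proof -
  define U where "U = T - a *\<^sub>R id_blinfun"
  have U: "self_adjoint U" unfolding U_def by (intro self_adjoint_intros T)
  have "poly_op ([:-a, 1:]\<^sup>2 + [:b\<^sup>2:]) T = (U o\<^sub>L U) + b\<^sup>2 *\<^sub>R id_blinfun"
    by (rule blinfun_eqI) (simp add: U_def power2_eq_square poly_op_add poly_op_mult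
        poly_op_pCons blinfun.bilinear_simps algebra_simps,
        simp add: scaleR_add_left[symmetric] mult_2_right)
  then have "b\<^sup>2 * (norm x)\<^sup>2 \<le> inner (poly_op ([:-a, 1:]\<^sup>2 + [:b\<^sup>2:]) T x) x" for x
    using inner_self_adjoint_square[OF U, of x]
    by (simp add: blinfun.add_left blinfun.scaleR_left inner_add_left power2_norm_eq_inner)
  then show ?thesis
    using \<open>b \<noteq> 0\<close> by (intro self_adjoint_bounded_below_invertible self_adjoint_poly_op T) auto
qed

lemma poly_op_factor_invertible:
  fixes T :: "'a::{real_inner, complete_space} \<Rightarrow>\<^sub>L 'a"
  assumes T: "self_adjoint T" and "degree q > 0"
    and no_root: "\<And>t. t \<in> op_spectrum T \<Longrightarrow> poly q t \<noteq> 0"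
  obtains d q1 where "q = d * q1" and "degree q1 < degree q" and "op_invertible (poly_op d T)"
proof -
  have smaller: "degree q1 < degree q" if q: "q = d * q1" and "degree d > 0" for d q1
  proof -
    have "d \<noteq> 0" "q1 \<noteq> 0" using that \<open>degree q > 0\<close> by auto
    then show ?thesis using q \<open>degree d > 0\<close> by (simp add: degree_mult_eq)
  qed
  from \<open>degree q > 0\<close> show ?thesis
  proof (cases rule: real_poly_linear_or_quadratic_factor)
    case (linear r)
    then obtain q1 where q: "q = [:-r, 1:] * q1" by (rule dvdE)
    then have "r \<notin> op_spectrum T" using no_root by fastforce
    then have "op_invertible (poly_op [:-r, 1:] T)"
      by (simp add: op_spectrum_def poly_op_pCons)
    moreover have "degree q1 < degree q" by (rule smaller[OF q]) simp
    ultimately show ?thesis using that[OF q] by blast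
  next
    case (quadratic a b)
    then obtain q1 where q: "q = ([:-a, 1:]\<^sup>2 + [:b\<^sup>2:]) * q1" by (auto elim: dvdE)
    have "degree q1 < degree q"
      by (rule smaller[OF q]) (simp add: degree_add_eq_left degree_power_eq)
    then show ?thesis
      using that[OF q] poly_op_quadratic_invertible[OF T \<open>b \<noteq> 0\<close>] by blast
  qed
qed

lemma poly_op_invertible:
  fixes T :: "'a::{real_inner, complete_space} \<Rightarrow>\<^sub>L 'a"
  assumes T: "self_adjoint T" and nontrivial: "\<exists>x::'a. x \<noteq> 0"
    and no_root: "\<And>t. t \<in> op_spectrum T \<Longrightarrow> poly q t \<noteq> 0"
  shows "op_invertible (poly_op q T)"
  using no_root
proof (induction "degree q" arbitrary: q rule: less_induct)
  case (less q)
  show ?case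
  proof (cases "degree q = 0")
    case True
    then obtain c where c: "q = [:c:]" by (meson degree_eq_zeroE)
    obtain t where "t \<in> op_spectrum T"
      using self_adjoint_norm_in_spectrum[OF T nontrivial] by blast
    then have "c \<noteq> 0" using less.prems c by fastforce
    then show ?thesis by (simp add: c op_invertible_scaleR_iff op_invertible_id)
  next
    case False
    then obtain d q1 where q: "q = d * q1" and "degree q1 < degree q" "op_invertible (poly_op d T)"
      using poly_op_factor_invertible[OF T _ less.prems] by blast
    moreover have "op_invertible (poly_op q1 T)"
      using less.prems q by (intro less.hyps[OF \<open>degree q1 < degree q\<close>]) auto
    ultimately show ?thesis by (simp add: poly_op_mult op_invertible_compose)
  qed
qed

lemma poly_op_spectrum:
  fixes T :: "'a::{real_inner, complete_space} \<Rightarrow>\<^sub>L 'a"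
  assumes T: "self_adjoint T" and nontrivial: "\<exists>x::'a. x \<noteq> 0"
    and l: "l \<in> op_spectrum (poly_op p T)"
  shows "\<exists>t\<in>op_spectrum T. poly p t = l"
proof (rule ccontr)
  assume "\<not> ?thesis"
  then have "op_invertible (poly_op (p - [:l:]) T)"
    by (intro poly_op_invertible[OF T nontrivial]) auto
  with l show False by (simp add: poly_op_diff op_spectrum_def)
qed

lemma norm_poly_op_le:
  fixes T :: "'a::{real_inner, complete_space} \<Rightarrow>\<^sub>L 'a"
  assumes T: "self_adjoint T" and "c \<ge> 0"
    and bound: "\<And>t. t \<in> op_spectrum T \<Longrightarrow> \<bar>poly p t\<bar> \<le> c"
  shows "norm (poly_op p T) \<le> c"
proof (cases "\<exists>x::'a. x \<noteq> 0")
  case False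
  then have "poly_op p T = 0" by (intro blinfun_eqI) auto
  then show ?thesis using \<open>c \<ge> 0\<close> by simp
next
  case True
  then obtain l where "l \<in> op_spectrum (poly_op p T)" and "norm (poly_op p T) = \<bar>l\<bar>"
    using self_adjoint_norm_in_spectrum[OF self_adjoint_poly_op[OF T]] by fastforce
  then show ?thesis using poly_op_spectrum[OF T True] bound by fastforce
qed

section \<open>Continuous functional calculus\<close>

lemma polynomial_function_eq_poly:
  fixes g :: "real \<Rightarrow> real"
  assumes "polynomial_function g"
  shows "\<exists>p. g = poly p"
proof -
  obtain a n where "g = (\<lambda>x. \<Sum>i\<le>n. a i * x ^ i)"
    using assms unfolding real_polynomial_function_eq[symmetric] real_polynomial_function_iff_sum
    by blast
  then have "g = poly (\<Sum>i\<le>n. monom (a i) i)"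
    by (simp add: fun_eq_iff poly_sum poly_monom)
  then show ?thesis ..
qed

lemma cfc_cong:
  assumes "\<And>t. t \<in> op_spectrum T \<Longrightarrow> f t = g t"
  shows "cfc f T = cfc g T"
proof -
  have "(\<forall>t\<in>op_spectrum T. \<bar>f t - poly p t\<bar> < \<delta>) \<longleftrightarrow> (\<forall>t\<in>op_spectrum T. \<bar>g t - poly p t\<bar> < \<delta>)"
    for p \<delta>
    using assms by auto
  then show ?thesis unfolding cfc_def by simp
qed

lemma norm_poly_op_diff_le:
  fixes T :: "'a::{real_inner, complete_space} \<Rightarrow>\<^sub>L 'a"
  assumes T: "self_adjoint T"
    and p: "\<forall>t\<in>op_spectrum T. \<bar>f t - poly p t\<bar> < e"
    and q: "\<forall>t\<in>op_spectrum T. \<bar>f t - poly q t\<bar> < e'"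
    and "e > 0" "e' > 0"
  shows "norm (poly_op p T - poly_op q T) \<le> e + e'"
proof -
  have "\<bar>poly (p - q) t\<bar> \<le> e + e'" if "t \<in> op_spectrum T" for t
  proof -
    have "\<bar>f t - poly p t\<bar> < e" "\<bar>f t - poly q t\<bar> < e'"
      using that p q by auto
    then show ?thesis by (simp add: abs_le_iff abs_less_iff)
  qed
  then show ?thesis
    using norm_poly_op_le[OF T, of "e + e'" "p - q"] \<open>e > 0\<close> \<open>e' > 0\<close> by (simp add: poly_op_diff)
qed

lemma uniform_limit_polyD:
  fixes f :: "real \<Rightarrow> real"
  assumes "uniform_limit S (\<lambda>n. poly (P n)) f sequentially" and "e > 0"
  obtains N where "\<And>n. n \<ge> N \<Longrightarrow> \<forall>t\<in>S. \<bar>f t - poly (P n) t\<bar> < e"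
proof -
  obtain N where "\<forall>n\<ge>N. \<forall>t\<in>S. dist (poly (P n) t) (f t) < e"
    using assms unfolding uniform_limit_sequentially_iff by blast
  then show ?thesis by (intro that[of N]) (simp add: dist_real_def abs_minus_commute)
qed

lemma Cauchy_poly_op:
  fixes T :: "'a::{real_inner, complete_space} \<Rightarrow>\<^sub>L 'a"
  assumes T: "self_adjoint T"
    and P: "uniform_limit (op_spectrum T) (\<lambda>n. poly (P n)) f sequentially"
  shows "Cauchy (\<lambda>n. poly_op (P n) T)"
proof (rule CauchyI)
  fix e :: real assume "e > 0"
  then have "e / 4 > 0" by simp
  then obtain N where N: "\<And>n. n \<ge> N \<Longrightarrow> \<forall>t\<in>op_spectrum T. \<bar>f t - poly (P n) t\<bar> < e / 4"
    using uniform_limit_polyD[OF P] by blast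
  have "norm (poly_op (P m) T - poly_op (P n) T) < e" if "m \<ge> N" "n \<ge> N" for m n
  proof -
    have "norm (poly_op (P m) T - poly_op (P n) T) \<le> e / 4 + e / 4"
      using \<open>e > 0\<close> by (intro norm_poly_op_diff_le[OF T N[OF that(1)] N[OF that(2)]]) simp_all
    then show ?thesis using \<open>e > 0\<close> by linarith
  qed
  then show "\<exists>M. \<forall>m\<ge>M. \<forall>n\<ge>M. norm (poly_op (P m) T - poly_op (P n) T) < e" by blast
qed

lemma norm_limit_minus_poly_op_le:
  fixes T :: "'a::{real_inner, complete_space} \<Rightarrow>\<^sub>L 'a"
  assumes T: "self_adjoint T"
    and P: "uniform_limit (op_spectrum T) (\<lambda>n. poly (P n)) f sequentially"
    and L: "(\<lambda>n. poly_op (P n) T) \<longlonglongrightarrow> L"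
    and "\<delta> > 0" and p: "\<forall>t\<in>op_spectrum T. \<bar>f t - poly p t\<bar> < \<delta>"
  shows "norm (L - poly_op p T) \<le> \<delta>"
proof (rule field_le_epsilon)
  fix \<eta> :: real assume "\<eta> > 0"
  then obtain N where N: "\<And>n. n \<ge> N \<Longrightarrow> \<forall>t\<in>op_spectrum T. \<bar>f t - poly (P n) t\<bar> < \<eta>"
    using uniform_limit_polyD[OF P] by blast
  show "norm (L - poly_op p T) \<le> \<delta> + \<eta>"
  proof (rule Lim_bounded)
    show "(\<lambda>n. norm (poly_op (P n) T - poly_op p T)) \<longlonglongrightarrow> norm (L - poly_op p T)"
      by (intro tendsto_intros L)
    show "\<forall>n\<ge>N. norm (poly_op (P n) T - poly_op p T) \<le> \<delta> + \<eta>"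
    proof (intro allI impI)
      fix n assume "n \<ge> N"
      have "norm (poly_op (P n) T - poly_op p T) \<le> \<eta> + \<delta>"
        by (rule norm_poly_op_diff_le[OF T N[OF \<open>n \<ge> N\<close>] p \<open>\<eta> > 0\<close> \<open>\<delta> > 0\<close>])
      then show "norm (poly_op (P n) T - poly_op p T) \<le> \<delta> + \<eta>" by simp
    qed
  qed
qed

lemma cfc_limit:
  fixes T :: "'a::{real_inner, complete_space} \<Rightarrow>\<^sub>L 'a"
  assumes T: "self_adjoint T"
    and P: "uniform_limit (op_spectrum T) (\<lambda>n. poly (P n)) f sequentially"
  shows "(\<lambda>n. poly_op (P n) T) \<longlonglongrightarrow> cfc f T"
proof -
  let ?S = "op_spectrum T" and ?L = "\<lambda>n. poly_op (P n) T"
  define is_cfc where "is_cfc L \<longleftrightarrow> (\<forall>\<epsilon>>0. \<exists>\<delta>>0. \<forall>p.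
      (\<forall>t\<in>?S. \<bar>f t - poly p t\<bar> < \<delta>) \<longrightarrow> norm (L - poly_op p T) < \<epsilon>)" for L
  obtain L where L: "?L \<longlonglongrightarrow> L"
    using Cauchy_blinfun_convergent[OF Cauchy_poly_op[OF T P]] by (auto simp: convergent_def)
  have "is_cfc L"
    unfolding is_cfc_def
  proof (intro allI impI)
    fix \<epsilon> :: real assume "\<epsilon> > 0"
    have "norm (L - poly_op p T) < \<epsilon>" if "\<forall>t\<in>?S. \<bar>f t - poly p t\<bar> < \<epsilon> / 2" for p
      using norm_limit_minus_poly_op_le[OF T P L _ that] \<open>\<epsilon> > 0\<close> by simp
    moreover have "\<epsilon> / 2 > 0" using \<open>\<epsilon> > 0\<close> by simp
    ultimately show "\<exists>\<delta>>0. \<forall>p. (\<forall>t\<in>?S. \<bar>f t - poly p t\<bar> < \<delta>) \<longrightarrow> norm (L - poly_op p T) < \<epsilon>"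
      by blast
  qed
  have conv: "?L \<longlonglongrightarrow> L'" if L': "is_cfc L'" for L'
  proof (rule LIMSEQ_I)
    fix \<epsilon> :: real assume "\<epsilon> > 0"
    then obtain \<delta> where "\<delta> > 0"
      and \<delta>: "\<And>p. \<forall>t\<in>?S. \<bar>f t - poly p t\<bar> < \<delta> \<Longrightarrow> norm (L' - poly_op p T) < \<epsilon>"
      using L' unfolding is_cfc_def by blast
    obtain N where N: "\<And>n. n \<ge> N \<Longrightarrow> \<forall>t\<in>?S. \<bar>f t - poly (P n) t\<bar> < \<delta>"
      using uniform_limit_polyD[OF P \<open>\<delta> > 0\<close>] by blast
    have "norm (?L n - L') < \<epsilon>" if "n \<ge> N" for n
      unfolding norm_minus_commute[of "poly_op (P n) T"] by (rule \<delta>[OF N[OF that]])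
    then show "\<exists>N. \<forall>n\<ge>N. norm (?L n - L') < \<epsilon>" by blast
  qed
  have "cfc f T = (THE L. is_cfc L)"
    unfolding cfc_def is_cfc_def ..
  also have "\<dots> = L"
  proof (rule the_equality)
    show "is_cfc L" by fact
    show "L' = L" if "is_cfc L'" for L'
      by (rule LIMSEQ_unique[OF conv[OF that] L])
  qed
  finally show ?thesis using L by simp
qed

lemma cfc_const:
  fixes T :: "'a::{real_inner, complete_space} \<Rightarrow>\<^sub>L 'a"
  assumes T: "self_adjoint T"
  shows "cfc (\<lambda>_. c) T = c *\<^sub>R id_blinfun"
proof -
  have "(\<lambda>n. poly_op [:c:] T) \<longlonglongrightarrow> cfc (\<lambda>_. c) T"
    by (rule cfc_limit[OF T]) (rule uniform_limitI, simp)
  then have "(\<lambda>n. c *\<^sub>R id_blinfun) \<longlonglongrightarrow> cfc (\<lambda>_. c) T" by simp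
  then show ?thesis using tendsto_const by (rule LIMSEQ_unique)
qed

lemma cfc_ident:
  fixes T :: "'a::{real_inner, complete_space} \<Rightarrow>\<^sub>L 'a"
  assumes T: "self_adjoint T"
  shows "cfc (\<lambda>t. t) T = T"
proof -
  have "(\<lambda>n. poly_op [:0, 1:] T) \<longlonglongrightarrow> cfc (\<lambda>t. t) T"
    by (rule cfc_limit[OF T]) (rule uniform_limitI, simp)
  then have "(\<lambda>n. T) \<longlonglongrightarrow> cfc (\<lambda>t. t) T" by (simp add: poly_op_pCons)
  then show ?thesis using tendsto_const by (rule LIMSEQ_unique)
qed

context
  fixes T :: "'a::{real_inner, complete_space} \<Rightarrow>\<^sub>L 'a" and K :: "real set"
  assumes T: "self_adjoint T" and K: "compact K" and spectrum_K: "op_spectrum T \<subseteq> K"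
begin

lemma cfc_approx:
  assumes f: "continuous_on K f"
  obtains P where "uniform_limit K (\<lambda>n. poly (P n)) f sequentially"
    and "(\<lambda>n. poly_op (P n) T) \<longlonglongrightarrow> cfc f T"
proof -
  obtain g where g: "uniform_limit K g f sequentially" and "\<And>n. polynomial_function (g n)"
    using Stone_Weierstrass_uniform_limit[OF K f] by blast
  then have "\<forall>n. \<exists>p. g n = poly p"
    using polynomial_function_eq_poly by blast
  then obtain P where "g = (\<lambda>n. poly (P n))"
    by (metis choice ext)
  then have P: "uniform_limit K (\<lambda>n. poly (P n)) f sequentially"
    using g by simp
  show ?thesis
    using P cfc_limit[OF T uniform_limit_on_subset[OF P spectrum_K]] by (rule that)
qed

lemma cfc_eqI:
  assumes "uniform_limit K (\<lambda>n. poly (P n)) f sequentially"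
    and "(\<lambda>n. poly_op (P n) T) \<longlonglongrightarrow> L"
  shows "cfc f T = L"
  using cfc_limit[OF T uniform_limit_on_subset[OF assms(1) spectrum_K]] assms(2)
  by (rule LIMSEQ_unique)

lemma cfc_add:
  assumes f: "continuous_on K f" and g: "continuous_on K g"
  shows "cfc (\<lambda>t. f t + g t) T = cfc f T + cfc g T"
proof -
  obtain P where P: "uniform_limit K (\<lambda>n. poly (P n)) f sequentially"
    "(\<lambda>n. poly_op (P n) T) \<longlonglongrightarrow> cfc f T"
    using cfc_approx[OF f] by blast
  obtain Q where Q: "uniform_limit K (\<lambda>n. poly (Q n)) g sequentially"
    "(\<lambda>n. poly_op (Q n) T) \<longlonglongrightarrow> cfc g T"
    using cfc_approx[OF g] by blast
  show ?thesis
  proof (rule cfc_eqI)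
    show "uniform_limit K (\<lambda>n. poly (P n + Q n)) (\<lambda>t. f t + g t) sequentially"
      using uniform_limit_add[OF P(1) Q(1)] by (simp add: poly_add[abs_def])
    show "(\<lambda>n. poly_op (P n + Q n) T) \<longlonglongrightarrow> cfc f T + cfc g T"
      unfolding poly_op_add by (intro tendsto_add P(2) Q(2))
  qed
qed

lemma cfc_scaleR:
  assumes f: "continuous_on K f"
  shows "cfc (\<lambda>t. c * f t) T = c *\<^sub>R cfc f T"
proof -
  obtain P where P: "uniform_limit K (\<lambda>n. poly (P n)) f sequentially"
    "(\<lambda>n. poly_op (P n) T) \<longlonglongrightarrow> cfc f T"
    using cfc_approx[OF f] by blast
  show ?thesis
  proof (rule cfc_eqI)
    show "uniform_limit K (\<lambda>n. poly (smult c (P n))) (\<lambda>t. c * f t) sequentially"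
      using bounded_linear.uniform_limit[OF bounded_linear_mult_right P(1)]
      by (simp add: poly_smult[abs_def])
    show "(\<lambda>n. poly_op (smult c (P n)) T) \<longlonglongrightarrow> c *\<^sub>R cfc f T"
      unfolding poly_op_smult by (intro tendsto_scaleR tendsto_const P(2))
  qed
qed

lemma cfc_diff:
  assumes f: "continuous_on K f" and g: "continuous_on K g"
  shows "cfc (\<lambda>t. f t - g t) T = cfc f T - cfc g T"
  using cfc_add[OF f, of "\<lambda>t. (-1) * g t"] cfc_scaleR[OF g, of "-1"] g
  by (simp add: continuous_on_minus)

lemma cfc_mult:
  assumes f: "continuous_on K f" and g: "continuous_on K g"
  shows "cfc (\<lambda>t. f t * g t) T = cfc f T o\<^sub>L cfc g T"
proof -
  obtain P where P: "uniform_limit K (\<lambda>n. poly (P n)) f sequentially"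
    "(\<lambda>n. poly_op (P n) T) \<longlonglongrightarrow> cfc f T"
    using cfc_approx[OF f] by blast
  obtain Q where Q: "uniform_limit K (\<lambda>n. poly (Q n)) g sequentially"
    "(\<lambda>n. poly_op (Q n) T) \<longlonglongrightarrow> cfc g T"
    using cfc_approx[OF g] by blast
  have "bounded (f ` K)" "bounded (g ` K)"
    using f g K by (auto intro: compact_imp_bounded compact_continuous_image)
  show ?thesis
  proof (rule cfc_eqI)
    show "uniform_limit K (\<lambda>n. poly (P n * Q n)) (\<lambda>t. f t * g t) sequentially"
      using uniform_lim_mult[OF P(1) Q(1) \<open>bounded (f ` K)\<close> \<open>bounded (g ` K)\<close>]
      by (simp add: poly_mult[abs_def])
    show "(\<lambda>n. poly_op (P n * Q n) T) \<longlonglongrightarrow> (cfc f T o\<^sub>L cfc g T)"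
      unfolding poly_op_mult by (intro blinfun_compose.tendsto P(2) Q(2))
  qed
qed

lemma self_adjoint_cfc:
  assumes f: "continuous_on K f"
  shows "self_adjoint (cfc f T)"
  unfolding self_adjoint_def
proof (intro allI)
  fix x y
  obtain P where P: "(\<lambda>n. poly_op (P n) T) \<longlonglongrightarrow> cfc f T"
    using cfc_approx[OF f] by blast
  have "(\<lambda>n. inner (poly_op (P n) T x) y) \<longlonglongrightarrow> inner (cfc f T x) y"
    by (intro tendsto_intros P)
  moreover have "(\<lambda>n. inner (poly_op (P n) T x) y) \<longlonglongrightarrow> inner x (cfc f T y)"
    unfolding self_adjoint_apply[OF self_adjoint_poly_op[OF T]] by (intro tendsto_intros P)
  ultimately show "inner (cfc f T x) y = inner x (cfc f T y)"
    by (rule LIMSEQ_unique)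
qed

lemma cfc_nonneg:
  assumes f: "continuous_on K f" and nonneg: "\<And>t. t \<in> op_spectrum T \<Longrightarrow> f t \<ge> 0"
  shows "inner (cfc f T x) x \<ge> 0"
proof -
  have sqrt_f: "continuous_on K (\<lambda>t. sqrt (f t))"
    using f by (intro continuous_intros)
  \<comment> \<open>\<open>f(T)\<close> is the square of the self-adjoint operator \<open>(sqrt \<circ> f)(T)\<close>\<close>
  have "cfc f T = cfc (\<lambda>t. sqrt (f t) * sqrt (f t)) T"
    by (rule cfc_cong) (simp add: nonneg)
  also have "\<dots> = cfc (\<lambda>t. sqrt (f t)) T o\<^sub>L cfc (\<lambda>t. sqrt (f t)) T"
    by (rule cfc_mult[OF sqrt_f sqrt_f])
  finally show ?thesis
    using inner_self_adjoint_square[OF self_adjoint_cfc[OF sqrt_f]] by simp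
qed

lemma cfc_mono:
  assumes f: "continuous_on K f" and g: "continuous_on K g"
    and le: "\<And>t. t \<in> op_spectrum T \<Longrightarrow> f t \<le> g t"
  shows "op_le (cfc f T) (cfc g T)"
  unfolding op_le_def
proof
  fix x
  have "inner (cfc (\<lambda>t. g t - f t) T x) x \<ge> 0"
    using f g le by (intro cfc_nonneg continuous_intros) auto
  then show "inner ((cfc g T - cfc f T) x) x \<ge> 0"
    by (simp add: cfc_diff[OF g f])
qed

end

section \<open>Strictly positive operators\<close>

lemma positive_op_sqrt:
  fixes A :: "'a::{real_inner, complete_space} \<Rightarrow>\<^sub>L 'a"
  assumes A: "self_adjoint A" and nonneg: "\<And>x. inner (A x) x \<ge> 0"
  obtains R where "self_adjoint R" and "R o\<^sub>L R = A"
proof -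
  have spectrum: "op_spectrum A \<subseteq> {0..norm A}"
    using nonneg inner_apply_le_norm by (intro self_adjoint_spectrum_subset[OF A]) auto
  have sqrt: "continuous_on {0..norm A} sqrt"
    by (intro continuous_intros)
  have "cfc sqrt A o\<^sub>L cfc sqrt A = cfc (\<lambda>t. sqrt t * sqrt t) A"
    by (rule cfc_mult[OF A compact_Icc spectrum sqrt sqrt, symmetric])
  also have "\<dots> = cfc (\<lambda>t. t) A"
    by (rule cfc_cong) (use spectrum in auto)
  also have "\<dots> = A"
    by (rule cfc_ident[OF A])
  finally show ?thesis
    by (rule that[OF self_adjoint_cfc[OF A compact_Icc spectrum sqrt]])
qed

lemma strictly_positive_bounded_below:
  fixes A :: "'a::{real_inner, complete_space} \<Rightarrow>\<^sub>L 'a"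
  assumes "strictly_positive A"
  obtains m where "m > 0" and "\<And>x. m * (norm x)\<^sup>2 \<le> inner (A x) x"
proof -
  have A: "self_adjoint A" and nonneg: "\<And>x. inner (A x) x \<ge> 0" and "op_invertible A"
    using assms by (auto simp: strictly_positive_def)
  \<comment> \<open>\<open>(A x, x) = norm (R x)\<^sup>2\<close> for a square root \<open>R\<close> of \<open>A\<close>, and \<open>norm x \<le> c * norm (R x)\<close>
    by invertibility\<close>
  obtain R where R: "self_adjoint R" and "R o\<^sub>L R = A"
    using positive_op_sqrt[OF A nonneg] by blast
  then have RR: "R (R x) = A x" for x
    by (metis blinfun_apply_blinfun_compose)
  obtain k where "k > 0" and k: "\<And>x. norm x \<le> k * norm (A x)"
    using op_invertible_bounded_below[OF \<open>op_invertible A\<close>] by blast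
  define c where "c = k * norm R"
  have upper: "(norm x)\<^sup>2 \<le> c\<^sup>2 * inner (A x) x" for x
  proof -
    have "norm x \<le> k * norm (R (R x))" using k[of x] by (simp add: RR)
    also have "\<dots> \<le> k * (norm R * norm (R x))"
      using \<open>k > 0\<close> by (simp add: norm_blinfun mult_left_mono)
    finally have "norm x \<le> c * norm (R x)" by (simp add: c_def mult.assoc)
    then have "(norm x)\<^sup>2 \<le> (c * norm (R x))\<^sup>2" by (rule power_mono) simp
    also have "\<dots> = c\<^sup>2 * inner (A x) x"
      using inner_self_adjoint_square[OF R, of x] by (simp add: RR power_mult_distrib)
    finally show ?thesis .
  qed
  have "0 < c\<^sup>2 + 1" using zero_le_power2[of c] by linarith
  show ?thesis
  proof (rule that)
    show "0 < 1 / (c\<^sup>2 + 1)" using \<open>0 < c\<^sup>2 + 1\<close> by simp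
    show "1 / (c\<^sup>2 + 1) * (norm x)\<^sup>2 \<le> inner (A x) x" for x
    proof -
      have "(norm x)\<^sup>2 \<le> (c\<^sup>2 + 1) * inner (A x) x"
        using upper[of x] nonneg[of x] unfolding distrib_right by linarith
      then show ?thesis using \<open>0 < c\<^sup>2 + 1\<close> by (simp add: pos_divide_le_eq mult.commute)
    qed
  qed
qed

lemma strictly_positive_spectrum_compact:
  fixes A :: "'a::{real_inner, complete_space} \<Rightarrow>\<^sub>L 'a"
  assumes "strictly_positive A"
  obtains K where "compact K" and "op_spectrum A \<subseteq> K" and "K \<subseteq> {0<..}"
proof -
  obtain m where "m > 0" and "\<And>x. m * (norm x)\<^sup>2 \<le> inner (A x) x"
    using strictly_positive_bounded_below[OF assms] by blast
  then have "op_spectrum A \<subseteq> {m..norm A}"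
    using assms inner_apply_le_norm
    by (intro self_adjoint_spectrum_subset) (auto simp: strictly_positive_def)
  then show ?thesis using \<open>m > 0\<close> by (intro that[of "{m..norm A}"]) auto
qed

lemma op_powr_add:
  fixes A :: "'a::{real_inner, complete_space} \<Rightarrow>\<^sub>L 'a"
  assumes "strictly_positive A"
  shows "op_powr A (a + b) = op_powr A a o\<^sub>L op_powr A b"
proof -
  obtain K where K: "compact K" "op_spectrum A \<subseteq> K" "K \<subseteq> {0<..}"
    using strictly_positive_spectrum_compact[OF assms] by blast
  have A: "self_adjoint A" using assms by (simp add: strictly_positive_def)
  have powr: "continuous_on K (\<lambda>t. t powr c)" for c
    using K(3) by (intro continuous_intros) auto
  have "op_powr A (a + b) = cfc (\<lambda>t. t powr a * t powr b) A"
    unfolding op_powr_def by (rule cfc_cong) (simp add: powr_add)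
  also have "\<dots> = op_powr A a o\<^sub>L op_powr A b"
    unfolding op_powr_def by (rule cfc_mult[OF A K(1,2) powr powr])
  finally show ?thesis .
qed

lemma op_powr_0:
  fixes A :: "'a::{real_inner, complete_space} \<Rightarrow>\<^sub>L 'a"
  assumes "strictly_positive A"
  shows "op_powr A 0 = id_blinfun"
proof -
  obtain K where K: "compact K" "op_spectrum A \<subseteq> K" "K \<subseteq> {0<..}"
    using strictly_positive_spectrum_compact[OF assms] by blast
  have "op_powr A 0 = cfc (\<lambda>_. 1) A"
    unfolding op_powr_def by (rule cfc_cong) (use K in auto)
  then show ?thesis
    using cfc_const[of A 1] assms by (simp add: strictly_positive_def)
qed

lemma strictly_positive_op_powr:
  fixes A :: "'a::{real_inner, complete_space} \<Rightarrow>\<^sub>L 'a"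
  assumes "strictly_positive A"
  shows "strictly_positive (op_powr A a)"
proof -
  obtain K where K: "compact K" "op_spectrum A \<subseteq> K" "K \<subseteq> {0<..}"
    using strictly_positive_spectrum_compact[OF assms] by blast
  have A: "self_adjoint A" using assms by (simp add: strictly_positive_def)
  have powr: "continuous_on K (\<lambda>t. t powr a)"
    using K(3) by (intro continuous_intros) auto
  have "self_adjoint (op_powr A a)"
    unfolding op_powr_def by (rule self_adjoint_cfc[OF A K(1,2) powr])
  moreover have "inner (op_powr A a x) x \<ge> 0" for x
    unfolding op_powr_def by (rule cfc_nonneg[OF A K(1,2) powr]) simp
  moreover have "op_invertible (op_powr A a)"
    using op_powr_add[OF assms, of a "- a"] op_powr_add[OF assms, of "- a" a] op_powr_0[OF assms]
    unfolding op_invertible_def by (intro exI[of _ "op_powr A (- a)"]) simp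
  ultimately show ?thesis by (simp add: strictly_positive_def)
qed

lemma strictly_positive_sandwich:
  assumes P: "self_adjoint P" "op_invertible P" and B: "strictly_positive B"
  shows "strictly_positive (P o\<^sub>L B o\<^sub>L P)"
proof -
  have "inner ((P o\<^sub>L B o\<^sub>L P) x) x = inner (B (P x)) (P x)" for x
    by (simp add: self_adjoint_apply[OF P(1)])
  then show ?thesis
    using assms self_adjoint_sandwich[OF P(1)]
    by (simp add: strictly_positive_def op_invertible_compose)
qed

section \<open>Operator perspectives and the entropy bounds\<close>

definition op_perspective ::
    "(real \<Rightarrow> real) \<Rightarrow> ('a::real_normed_vector \<Rightarrow>\<^sub>L 'a) \<Rightarrow> ('a \<Rightarrow>\<^sub>L 'a) \<Rightarrow> ('a \<Rightarrow>\<^sub>L 'a)" where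
  "op_perspective f A B = (let C = op_powr A (-1/2) o\<^sub>L B o\<^sub>L op_powr A (-1/2)
                           in op_powr A (1/2) o\<^sub>L cfc f C o\<^sub>L op_powr A (1/2))"

lemma wmean_eq_op_perspective: "wmean \<nu> A B = op_perspective (\<lambda>t. t powr \<nu>) A B"
  by (simp add: wmean_def op_perspective_def op_powr_def)

lemma strictly_positive_congruence:
  fixes A B :: "'a::{real_inner, complete_space} \<Rightarrow>\<^sub>L 'a"
  assumes A: "strictly_positive A" and B: "strictly_positive B"
  shows "strictly_positive (op_powr A (-1/2) o\<^sub>L B o\<^sub>L op_powr A (-1/2))"
  using strictly_positive_op_powr[OF A, of "-1/2"] B
  by (intro strictly_positive_sandwich) (auto simp: strictly_positive_def)

lemma rel_entropy_eq_op_perspective: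
  fixes A B :: "'a::{real_inner, complete_space} \<Rightarrow>\<^sub>L 'a"
  assumes A: "strictly_positive A" and B: "strictly_positive B"
  shows "rel_entropy \<nu> A B = op_perspective (\<lambda>t. t powr \<nu> * ln t) A B"
proof -
  define C where "C = op_powr A (-1/2) o\<^sub>L B o\<^sub>L op_powr A (-1/2)"
  have "strictly_positive C" unfolding C_def by (rule strictly_positive_congruence[OF A B])
  then obtain K where K: "compact K" "op_spectrum C \<subseteq> K" "K \<subseteq> {0<..}"
    by (rule strictly_positive_spectrum_compact)
  have C: "self_adjoint C" using \<open>strictly_positive C\<close> by (simp add: strictly_positive_def)
  have product: "op_powr C \<nu> o\<^sub>L op_log C = cfc (\<lambda>t. t powr \<nu> * ln t) C"
    unfolding op_powr_def op_log_def using K(3)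
    by (intro cfc_mult[OF C K(1,2), symmetric] continuous_intros) auto
  then show ?thesis
    unfolding rel_entropy_def op_perspective_def Let_def C_def[symmetric]
    by (simp add: blinfun_compose_assoc flip: product)
qed

lemma op_perspective_linear:
  fixes A B :: "'a::{real_inner, complete_space} \<Rightarrow>\<^sub>L 'a"
  assumes A: "strictly_positive A" and B: "strictly_positive B"
    and f: "continuous_on {0<..} f" and g: "continuous_on {0<..} g"
  shows "op_perspective (\<lambda>t. a * f t + b * g t) A B
    = a *\<^sub>R op_perspective f A B + b *\<^sub>R op_perspective g A B"
proof -
  define C where "C = op_powr A (-1/2) o\<^sub>L B o\<^sub>L op_powr A (-1/2)"
  have "strictly_positive C" unfolding C_def by (rule strictly_positive_congruence[OF A B])
  then obtain K where K: "compact K" "op_spectrum C \<subseteq> K" "K \<subseteq> {0<..}"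
    by (rule strictly_positive_spectrum_compact)
  have C: "self_adjoint C" using \<open>strictly_positive C\<close> by (simp add: strictly_positive_def)
  have fK: "continuous_on K f" and gK: "continuous_on K g"
    using f g K(3) by (auto intro: continuous_on_subset)
  have "cfc (\<lambda>t. a * f t + b * g t) C = cfc (\<lambda>t. a * f t) C + cfc (\<lambda>t. b * g t) C"
    by (intro cfc_add[OF C K(1,2)] continuous_intros fK gK)
  also have "\<dots> = a *\<^sub>R cfc f C + b *\<^sub>R cfc g C"
    by (simp add: cfc_scaleR[OF C K(1,2)] fK gK)
  finally show ?thesis
    unfolding op_perspective_def Let_def C_def[symmetric]
    by (simp add: blinfun_compose.bilinear_simps)
qed

lemma op_perspective_mono:
  fixes A B :: "'a::{real_inner, complete_space} \<Rightarrow>\<^sub>L 'a"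
  assumes A: "strictly_positive A" and B: "strictly_positive B"
    and f: "continuous_on {0<..} f" and g: "continuous_on {0<..} g"
    and le: "\<And>t. t > 0 \<Longrightarrow> f t \<le> g t"
  shows "op_le (op_perspective f A B) (op_perspective g A B)"
proof -
  define C where "C = op_powr A (-1/2) o\<^sub>L B o\<^sub>L op_powr A (-1/2)"
  have "strictly_positive C" unfolding C_def by (rule strictly_positive_congruence[OF A B])
  then obtain K where K: "compact K" "op_spectrum C \<subseteq> K" "K \<subseteq> {0<..}"
    by (rule strictly_positive_spectrum_compact)
  have C: "self_adjoint C" using \<open>strictly_positive C\<close> by (simp add: strictly_positive_def)
  have "op_le (cfc f C) (cfc g C)"
    using f g K le by (intro cfc_mono[OF C K(1,2)]) (auto intro: continuous_on_subset)
  moreover have "self_adjoint (op_powr A (1/2))"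
    using strictly_positive_op_powr[OF A] by (simp add: strictly_positive_def)
  ultimately show ?thesis
    unfolding op_perspective_def Let_def C_def[symmetric] by (intro op_le_sandwich)
qed

lemma powr_ln_le_powr_diff_quotient:
  fixes t l \<beta> :: real
  assumes "t > 0" and "l > 0"
  shows "t powr \<beta> * ln t \<le> (t powr (\<beta> + l) - t powr \<beta>) / l"
    and "(t powr (\<beta> + l) - t powr \<beta>) / l \<le> t powr (\<beta> + l) * ln t"
proof -
  \<comment> \<open>\<open>ln s \<le> s - 1\<close> at \<open>s = t powr l\<close> and at \<open>s = t powr -l\<close>\<close>
  have "l * ln t \<le> t powr l - 1"
    using ln_le_minus_one[of "t powr l"] \<open>t > 0\<close> by (simp add: ln_powr)
  then have lower: "ln t \<le> (t powr l - 1) / l"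
    using \<open>l > 0\<close> by (simp add: pos_le_divide_eq mult.commute)
  have "- l * ln t \<le> t powr (- l) - 1"
    using ln_le_minus_one[of "t powr (- l)"] \<open>t > 0\<close> by (simp add: ln_powr)
  then have "t powr l * (- l * ln t) \<le> t powr l * (t powr (- l) - 1)"
    by (rule mult_left_mono) simp
  then have "t powr l - 1 \<le> l * (t powr l * ln t)"
    using \<open>t > 0\<close> by (simp add: right_diff_distrib powr_add[symmetric] algebra_simps)
  then have upper: "(t powr l - 1) / l \<le> t powr l * ln t"
    using \<open>l > 0\<close> by (simp add: pos_divide_le_eq mult.commute)
  have eq: "(t powr (\<beta> + l) - t powr \<beta>) / l = t powr \<beta> * ((t powr l - 1) / l)"
    by (simp add: powr_add algebra_simps diff_divide_distrib)
  show "t powr \<beta> * ln t \<le> (t powr (\<beta> + l) - t powr \<beta>) / l"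
    unfolding eq using mult_left_mono[OF lower, of "t powr \<beta>"] by simp
  show "(t powr (\<beta> + l) - t powr \<beta>) / l \<le> t powr (\<beta> + l) * ln t"
    unfolding eq using mult_left_mono[OF upper, of "t powr \<beta>"] by (simp add: powr_add mult.assoc)
qed

lemma rel_entropy_le_wmean_diff_quotient:
  fixes A B :: "'a::{real_inner, complete_space} \<Rightarrow>\<^sub>L 'a"
  assumes A: "strictly_positive A" and B: "strictly_positive B" and "l > 0"
  shows "op_le (rel_entropy \<beta> A B) ((1 / l) *\<^sub>R (wmean (\<beta> + l) A B - wmean \<beta> A B))"
    and "op_le ((1 / l) *\<^sub>R (wmean (\<beta> + l) A B - wmean \<beta> A B)) (rel_entropy (\<beta> + l) A B)"
proof -
  have powr: "continuous_on {0<..} (\<lambda>t. t powr a)" for a :: real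
    by (intro continuous_intros) auto
  have quotient: "(1 / l) *\<^sub>R (wmean (\<beta> + l) A B - wmean \<beta> A B)
      = op_perspective (\<lambda>t. (t powr (\<beta> + l) - t powr \<beta>) / l) A B"
    using op_perspective_linear[OF A B powr powr, of "1 / l" "\<beta> + l" "- 1 / l" \<beta>]
    by (simp add: wmean_eq_op_perspective scaleR_diff_right diff_divide_distrib)
  show "op_le (rel_entropy \<beta> A B) ((1 / l) *\<^sub>R (wmean (\<beta> + l) A B - wmean \<beta> A B))"
    unfolding quotient rel_entropy_eq_op_perspective[OF A B]
    using powr_ln_le_powr_diff_quotient(1) \<open>l > 0\<close>
    by (intro op_perspective_mono[OF A B] continuous_intros) auto
  show "op_le ((1 / l) *\<^sub>R (wmean (\<beta> + l) A B - wmean \<beta> A B)) (rel_entropy (\<beta> + l) A B)"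
    unfolding quotient rel_entropy_eq_op_perspective[OF A B]
    using powr_ln_le_powr_diff_quotient(2) \<open>l > 0\<close>
    by (intro op_perspective_mono[OF A B] continuous_intros) auto
qed

theorem proposition3:
  fixes A B :: "'a::{real_inner, complete_space} \<Rightarrow>\<^sub>L 'a"
    and l \<mu> :: real and k :: nat
  assumes "strictly_positive A" and "strictly_positive B" and "l > 0"
  shows "op_le (rel_entropy (\<mu> - (real k + 1) * l) A B) (tsallis \<mu> (int k + 1) (- l) A B)
       \<and> op_le (tsallis \<mu> (int k + 1) (- l) A B) (rel_entropy (\<mu> - real k * l) A B)
       \<and> op_le (rel_entropy (\<mu> + real k * l) A B) (tsallis \<mu> (int k + 1) l A B)
       \<and> op_le (tsallis \<mu> (int k + 1) l A B) (rel_entropy (\<mu> + (real k + 1) * l) A B)"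
proof -
  define a where "a = \<mu> - (real k + 1) * l"
  define b where "b = \<mu> + real k * l"
  have "\<mu> + real_of_int (int k + 1) * - l = a" "\<mu> + real_of_int (int k + 1 - 1) * - l = a + l"
    by (simp_all add: a_def algebra_simps)
  then have tsallis_neg: "tsallis \<mu> (int k + 1) (- l) A B
      = (1 / l) *\<^sub>R (wmean (a + l) A B - wmean a A B)"
    unfolding tsallis_def by (simp add: scaleR_diff_right)
  have "\<mu> + real_of_int (int k + 1) * l = b + l" "\<mu> + real_of_int (int k + 1 - 1) * l = b"
    by (simp_all add: b_def algebra_simps)
  then have tsallis_pos: "tsallis \<mu> (int k + 1) l A B
      = (1 / l) *\<^sub>R (wmean (b + l) A B - wmean b A B)"
    unfolding tsallis_def by simp
  have "\<mu> - real k * l = a + l" and "\<mu> + (real k + 1) * l = b + l"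
    by (simp_all add: a_def b_def algebra_simps)
  then show ?thesis
    unfolding tsallis_neg tsallis_pos a_def[symmetric] b_def[symmetric]
    using rel_entropy_le_wmean_diff_quotient[OF assms] by simp
qed

end
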